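(* Let $q$ be a prime power, let $\alpha,\beta\in\mathbb{F}_q\setminus\{0\}$, let $x_1,\dots,x_L\in\mathbb{F}_q^n$ be pairwise distinct and let $y_1,\dots,y_L\in\mathbb{F}_q^n$ be pairwise distinct. If $L\ge(\Gamma_q)^n$, then there exist $i,i',i''\in[L]$ with $i\ne i'$, $i\ne i''$ and $\alpha x_i+\beta y_i=\alpha x_{i'}+\beta y_{i''}$.
   Context: For an integer $t\ge2$ let $J(t)=\frac1t\min_{0<x<1}\frac{1+x+\cdots+x^{t-1}}{x^{(t-1)/3}}$, and for a prime power $q$ let $\Gamma_q:=q\,J(q)$ (so $\Gamma_q<0.945q$). *)

theory Defs
  imports "HOL-Analysis.Analysis"
begin

text \<open>J(t) = (1/t) * min over 0<x<1 of (1 + x + ... + x^(t-1)) / x^((t-1)/3).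
  The minimum is attained; we write it as an infimum over the open interval.\<close>
definition J :: "nat \<Rightarrow> real" where
  "J t = (1 / real t) *
     (INF x\<in>{0<..<(1::real)}. (\<Sum>k<t. x ^ k) / x powr ((real t - 1) / 3))"

definition Gamma_q :: "nat \<Rightarrow> real" where
  "Gamma_q q = real q * J q"

end

theory Submission
  imports Defs "HOL-Library.FuncSet" "HOL-Computational_Algebra.Polynomial"
begin

text \<open>Suppose no such triple exists. Then for every \<open>k\<close> the vectors \<open>\<alpha> x\<^sub>\<sigma>\<close>, \<open>\<beta> y\<^sub>\<sigma>\<close>,
  \<open>-(\<alpha> x\<^sub>\<sigma> + \<beta> y\<^sub>\<sigma>)\<close> indexed by \<open>\<sigma> \<in> [L]\<^sup>k\<close> form a tricoloured sum-free set in \<open>\<bbbF>\<^sub>q\<^sup>n\<^sup>k\<close>.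
  By the slice rank method (Croot--Lev--Pach, Ellenberg--Gijswijt, Tao) its size \<open>L\<^sup>k\<close> is at most
  three times the number of exponent vectors in \<open>{0..q-1}\<^sup>n\<^sup>k\<close> of degree at most \<open>(q-1)nk/3\<close>.
  Weighting an exponent vector of degree \<open>s\<close> by \<open>x\<^sup>s\<close>, with \<open>x\<close> the minimiser in the definition of
  \<open>\<Gamma>\<^sub>q\<close>, bounds that number by \<open>\<theta> \<Gamma>\<^sub>q\<^sup>n\<^sup>k / (1 - x)\<close>, where \<open>\<theta> S\<^sup>N\<close> bounds the coefficients of
  \<open>(1 + x X + \<dots> + x\<^sup>q\<^sup>-\<^sup>1 X\<^sup>q\<^sup>-\<^sup>1)\<^sup>N\<close> and \<open>S = 1 + x + \<dots> + x\<^sup>q\<^sup>-\<^sup>1\<close>. Splitting a Bernoulli component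
  \<open>(1 + X)/2\<close> off the normalised polynomial shows that \<open>\<theta>\<close> can be taken arbitrarily small for large
  \<open>N\<close>. For large \<open>k\<close> this gives \<open>L\<^sup>k \<le> 3/4 \<Gamma>\<^sub>q\<^sup>n\<^sup>k \<le> 3/4 L\<^sup>k\<close>, a contradiction.\<close>

section \<open>Slice rank of the diagonal tensor\<close>

lemma card_le_card_mult_card_of_fibres_inject:
  assumes "finite Z" "finite K" "\<Phi> ` X \<subseteq> Z"
    and "\<And>h0. h0 \<in> X \<Longrightarrow>
      \<exists>d. inj_on d {h\<in>X. \<Phi> h = \<Phi> h0} \<and> d ` {h\<in>X. \<Phi> h = \<Phi> h0} \<subseteq> K"
  shows "card X \<le> card Z * card K"
proof -
  have "card X = card (\<Union>z\<in>Z. {h\<in>X. \<Phi> h = z})"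
    using assms(3) by (intro arg_cong[where f = card]) auto
  also have "\<dots> \<le> (\<Sum>z\<in>Z. card {h\<in>X. \<Phi> h = z})"
    by (rule card_UN_le[OF assms(1)])
  also have "\<dots> \<le> (\<Sum>z\<in>Z. card K)"
  proof (rule sum_mono)
    fix z
    show "card {h\<in>X. \<Phi> h = z} \<le> card K"
    proof (cases "\<exists>h0\<in>X. \<Phi> h0 = z")
      case True
      then obtain h0 d where "h0 \<in> X" "\<Phi> h0 = z"
        and "inj_on d {h\<in>X. \<Phi> h = z}" "d ` {h\<in>X. \<Phi> h = z} \<subseteq> K"
        using assms(4) by blast
      then show ?thesis using card_inj_on_le assms(2) by blast
    next
      case False
      then have "{h\<in>X. \<Phi> h = z} = {}" by blast
      then show ?thesis by (metis card.empty zero_le)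
    qed
  qed
  finally show ?thesis by simp
qed

lemma card_linear_kernel_ge:
  fixes l :: "'c \<Rightarrow> 'p \<Rightarrow> 'F::{field,finite}"
  assumes "finite P" "finite A"
  shows "CARD('F) ^ card P \<le>
    CARD('F) ^ card A * card {h \<in> P \<rightarrow>\<^sub>E UNIV. \<forall>a\<in>A. (\<Sum>p\<in>P. h p * l a p) = 0}"
proof -
  let ?\<Phi> = "\<lambda>h. restrict (\<lambda>a. \<Sum>p\<in>P. h p * l a p) A"
  let ?K = "{h \<in> P \<rightarrow>\<^sub>E UNIV. \<forall>a\<in>A. (\<Sum>p\<in>P. h p * l a p) = 0}"
  have "card (P \<rightarrow>\<^sub>E (UNIV :: 'F set)) \<le> card (A \<rightarrow>\<^sub>E (UNIV :: 'F set)) * card ?K"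
  proof (rule card_le_card_mult_card_of_fibres_inject[where \<Phi> = ?\<Phi>])
    fix h0 :: "'p \<Rightarrow> 'F"
    let ?fibre = "{h \<in> P \<rightarrow>\<^sub>E UNIV. ?\<Phi> h = ?\<Phi> h0}"
    \<comment> \<open>the fibres of a linear map are translates of its kernel\<close>
    let ?d = "\<lambda>h. restrict (\<lambda>p. h p - h0 p) P"
    have "inj_on ?d ?fibre"
    proof (rule inj_onI)
      fix h h' assume "h \<in> ?fibre" "h' \<in> ?fibre" and d_eq: "?d h = ?d h'"
      have "h p = h' p" if "p \<in> P" for p
      proof -
        have "h p - h0 p = h' p - h0 p" using fun_cong[OF d_eq, of p] that by simp
        then show ?thesis by simp
      qed
      then show "h = h'" using \<open>h \<in> ?fibre\<close> \<open>h' \<in> ?fibre\<close>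
        by (intro PiE_ext[of _ P "\<lambda>_. UNIV"]) auto
    qed
    moreover have "?d h \<in> ?K" if "h \<in> ?fibre" for h
    proof -
      have same_image: "?\<Phi> h = ?\<Phi> h0" using that by simp
      have "(\<Sum>p\<in>P. h p * l a p) = (\<Sum>p\<in>P. h0 p * l a p)" if "a \<in> A" for a
        using fun_cong[OF same_image, of a] that by simp
      then show ?thesis by (simp add: left_diff_distrib sum_subtractf)
    qed
    ultimately show "\<exists>d. inj_on d ?fibre \<and> d ` ?fibre \<subseteq> ?K" by blast
  qed (use assms in \<open>auto simp: finite_PiE\<close>)
  then show ?thesis using assms by (simp add: card_PiE)
qed

lemma card_field_ge_2: "2 \<le> CARD('F::{field,finite})"
proof -
  have "card {0::'F, 1} \<le> CARD('F)" by (rule card_mono) auto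
  then show ?thesis by simp
qed

lemma linear_system_nontrivial_solution:
  fixes l :: "'c \<Rightarrow> 'p \<Rightarrow> 'F::{field,finite}"
  assumes "finite P" "finite A" "card A < card P"
  obtains h p where "h \<in> P \<rightarrow>\<^sub>E UNIV" "\<forall>a\<in>A. (\<Sum>p\<in>P. h p * l a p) = 0" "p \<in> P" "h p \<noteq> 0"
proof -
  let ?K = "{h \<in> P \<rightarrow>\<^sub>E UNIV. \<forall>a\<in>A. (\<Sum>p\<in>P. h p * l a p) = 0}"
  let ?zero = "restrict (\<lambda>_. 0) P :: 'p \<Rightarrow> 'F"
  have q: "2 \<le> CARD('F)" by (rule card_field_ge_2)
  have "CARD('F) ^ card A * CARD('F) = CARD('F) ^ Suc (card A)" by simp
  also have "\<dots> \<le> CARD('F) ^ card P"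
    using assms(3) q by (intro power_increasing) auto
  also have "\<dots> \<le> CARD('F) ^ card A * card ?K"
    by (rule card_linear_kernel_ge[OF assms(1,2)])
  finally have "2 \<le> card ?K" using q by simp
  have "\<not> ?K \<subseteq> {?zero}"
  proof
    assume "?K \<subseteq> {?zero}"
    then have "card ?K \<le> 1" using card_mono[of "{?zero}" ?K] by simp
    with \<open>2 \<le> card ?K\<close> show False by simp
  qed
  then obtain h where h: "h \<in> ?K" "h \<noteq> ?zero" by blast
  have "\<exists>p\<in>P. h p \<noteq> 0"
  proof (rule ccontr)
    assume "\<not> (\<exists>p\<in>P. h p \<noteq> 0)"
    then have "h = ?zero" using h(1) by (intro PiE_ext[of _ P "\<lambda>_. UNIV"]) auto
    with h(2) show False by contradiction
  qed
  with h that show ?thesis by blast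
qed

lemma annihilating_vector_with_large_support:
  fixes f :: "'a \<Rightarrow> 'p \<Rightarrow> 'F::{field,finite}"
  assumes P: "finite P" and A: "finite A"
  obtains v where "v \<in> P \<rightarrow>\<^sub>E UNIV" "\<forall>a\<in>A. (\<Sum>p\<in>P. v p * f a p) = 0"
    "card P \<le> card A + card {p\<in>P. v p \<noteq> 0}"
proof -
  define V where "V = {v \<in> P \<rightarrow>\<^sub>E UNIV. \<forall>a\<in>A. (\<Sum>p\<in>P. v p * f a p) = 0}"
  define supp where "supp v = {p\<in>P. v p \<noteq> 0}" for v :: "'p \<Rightarrow> 'F"
  have "restrict (\<lambda>_. 0) P \<in> V" unfolding V_def by auto
  moreover have "card (supp v) < Suc (card P)" for v
    unfolding supp_def using P by (simp add: card_mono le_imp_less_Suc)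
  ultimately have "\<exists>v. v \<in> V \<and> (\<forall>w. w \<in> V \<longrightarrow> card (supp w) \<le> card (supp v))"
    by (intro ex_has_greatest_nat[where b = "Suc (card P)"]) auto
  then obtain v where v: "v \<in> V" and v_max: "\<And>w. w \<in> V \<Longrightarrow> card (supp w) \<le> card (supp v)"
    by blast
  define S where "S = supp v"
  have S: "S \<subseteq> P" "finite S" unfolding S_def supp_def using P by auto
  have "card P \<le> card A + card S"
  proof (rule ccontr)
    assume "\<not> card P \<le> card A + card S"
    \<comment> \<open>then some nonzero vector annihilating all \<open>f a\<close> and vanishing on \<open>S\<close> enlarges the support of \<open>v\<close>\<close>
    define l where "l x p = (case x of Inl a \<Rightarrow> f a p | Inr s \<Rightarrow> if p = s then 1 else 0)" for x p
    have "card (A <+> S) < card P" using \<open>\<not> _\<close> A S by (simp add: card_Plus)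
    then obtain w p0 where w: "w \<in> P \<rightarrow>\<^sub>E UNIV" "\<forall>x\<in>A <+> S. (\<Sum>p\<in>P. w p * l x p) = 0"
      and p0: "p0 \<in> P" "w p0 \<noteq> 0"
      by (rule linear_system_nontrivial_solution[OF P finite_Plus[OF A S(2)]])
    have w_f: "(\<Sum>p\<in>P. w p * f a p) = 0" if "a \<in> A" for a
      using w(2)[rule_format, of "Inl a"] that by (simp add: l_def InlI)
    have w_S: "w s = 0" if "s \<in> S" for s
    proof -
      have "(\<Sum>p\<in>P. w p * l (Inr s) p) = (\<Sum>p\<in>P. if p = s then w p else 0)"
        by (rule sum.cong) (auto simp: l_def)
      also have "\<dots> = w s" using that S(1) P by auto
      finally show ?thesis using w(2)[rule_format, of "Inr s"] that by (simp add: InrI)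
    qed
    define v' where "v' = restrict (\<lambda>p. v p + w p) P"
    have "v' \<in> V"
      using v w_f by (simp add: V_def v'_def distrib_right sum.distrib)
    moreover have "p0 \<notin> S" using p0 w_S by blast
    moreover have "insert p0 S \<subseteq> supp v'"
      using p0 w_S S \<open>p0 \<notin> S\<close> by (auto simp: supp_def v'_def S_def)
    moreover have "finite (supp v')" using P by (simp add: supp_def)
    ultimately have "card (supp v) < card (supp v')"
      using S card_mono[of "supp v'" "insert p0 S"] unfolding S_def by simp
    with v_max[OF \<open>v' \<in> V\<close>] show False by simp
  qed
  with v that show ?thesis unfolding V_def S_def supp_def by blast
qed

lemma card_le_of_diagonal_factorization:
  fixes d :: "'p \<Rightarrow> 'F::{field,finite}" and u w :: "'r \<Rightarrow> 'p \<Rightarrow> 'F"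
  assumes S: "finite S" and R: "finite R" and d: "\<And>k. k \<in> S \<Longrightarrow> d k \<noteq> 0"
    and factorization: "\<And>j k. j \<in> S \<Longrightarrow> k \<in> S \<Longrightarrow>
      (if j = k then d k else 0) = (\<Sum>r\<in>R. u r j * w r k)"
  shows "card S \<le> card R"
proof -
  define scale where "scale c = restrict (\<lambda>j. c j * d j) S" for c :: "'p \<Rightarrow> 'F"
  define comb where "comb c = restrict (\<lambda>j. \<Sum>r\<in>R. c r * u r j) S" for c :: "'r \<Rightarrow> 'F"
  have "inj_on scale (S \<rightarrow>\<^sub>E UNIV)"
  proof (rule inj_onI)
    fix c c' assume c: "c \<in> S \<rightarrow>\<^sub>E UNIV" "c' \<in> S \<rightarrow>\<^sub>E UNIV" and "scale c = scale c'"
    have "c j = c' j" if "j \<in> S" for j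
      using fun_cong[OF \<open>scale c = scale c'\<close>, of j] d[OF that] that by (simp add: scale_def)
    then show "c = c'" using c by (intro PiE_ext[of _ S "\<lambda>_. UNIV"]) auto
  qed
  have "scale ` (S \<rightarrow>\<^sub>E UNIV) \<subseteq> comb ` (R \<rightarrow>\<^sub>E UNIV)"
  proof (rule image_subsetI)
    fix c :: "'p \<Rightarrow> 'F"
    let ?c' = "restrict (\<lambda>r. \<Sum>k\<in>S. c k * w r k) R"
    have "scale c j = comb ?c' j" for j
    proof (cases "j \<in> S")
      case True
      have "comb ?c' j = (\<Sum>k\<in>S. c k * (\<Sum>r\<in>R. u r j * w r k))"
        using True by (simp add: comb_def sum_distrib_left sum_distrib_right sum.swap[of _ R] mult_ac)
      also have "\<dots> = (\<Sum>k\<in>S. c k * (if j = k then d k else 0))"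
        using True by (intro sum.cong) (simp_all add: factorization)
      also have "\<dots> = scale c j"
        using True S by (simp add: scale_def if_distrib cong: if_cong)
      finally show ?thesis ..
    qed (simp add: scale_def comb_def)
    moreover have "?c' \<in> R \<rightarrow>\<^sub>E UNIV" by simp
    ultimately show "scale c \<in> comb ` (R \<rightarrow>\<^sub>E UNIV)" by blast
  qed
  have "card (S \<rightarrow>\<^sub>E (UNIV :: 'F set)) = card (scale ` (S \<rightarrow>\<^sub>E UNIV))"
    by (rule card_image[symmetric]) fact
  also have "\<dots> \<le> card (comb ` (R \<rightarrow>\<^sub>E UNIV))"
    by (rule card_mono) (use R \<open>scale ` _ \<subseteq> _\<close> in \<open>simp_all add: finite_PiE\<close>)
  also have "\<dots> \<le> card (R \<rightarrow>\<^sub>E (UNIV :: 'F set))"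
    by (rule card_image_le) (simp add: R finite_PiE)
  finally have "CARD('F) ^ card S \<le> CARD('F) ^ card R" using S R by (simp add: card_PiE)
  moreover have "1 < CARD('F)" using card_field_ge_2[where 'F = 'F] by simp
  ultimately show ?thesis by (rule power_le_imp_le_exp[rotated])
qed

theorem slice_rank_diagonal_le:
  fixes f :: "'a \<Rightarrow> 'p \<Rightarrow> 'F::{field,finite}" and g :: "'a \<Rightarrow> 'p \<Rightarrow> 'p \<Rightarrow> 'F"
    and f' :: "'b \<Rightarrow> 'p \<Rightarrow> 'F" and g' :: "'b \<Rightarrow> 'p \<Rightarrow> 'p \<Rightarrow> 'F"
    and f'' :: "'c \<Rightarrow> 'p \<Rightarrow> 'F" and g'' :: "'c \<Rightarrow> 'p \<Rightarrow> 'p \<Rightarrow> 'F"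
  assumes P: "finite P" and A: "finite A" and B: "finite B" and C: "finite C"
    and decomposition: "\<And>i j k. i \<in> P \<Longrightarrow> j \<in> P \<Longrightarrow> k \<in> P \<Longrightarrow>
      (if i = j \<and> j = k then 1 else 0) =
        (\<Sum>a\<in>A. f a i * g a j k) + (\<Sum>b\<in>B. f' b j * g' b i k) + (\<Sum>c\<in>C. f'' c k * g'' c i j)"
  shows "card P \<le> card A + card B + card C"
proof -
  obtain v where v: "v \<in> P \<rightarrow>\<^sub>E UNIV" "\<forall>a\<in>A. (\<Sum>i\<in>P. v i * f a i) = 0"
    and card_P: "card P \<le> card A + card {i\<in>P. v i \<noteq> 0}"
    by (rule annihilating_vector_with_large_support[OF P A])
  define S where "S = {i\<in>P. v i \<noteq> 0}"
  \<comment> \<open>contracting the first slot with \<open>v\<close> kills the \<open>A\<close>-slices\<close>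
  define u where "u x j = (case x of Inl b \<Rightarrow> f' b j | Inr c \<Rightarrow> \<Sum>i\<in>P. v i * g'' c i j)" for x j
  define w where "w x k = (case x of Inl b \<Rightarrow> \<Sum>i\<in>P. v i * g' b i k | Inr c \<Rightarrow> f'' c k)" for x k
  have "(if j = k then v k else 0) = (\<Sum>x\<in>B <+> C. u x j * w x k)" if "j \<in> S" "k \<in> S" for j k
  proof -
    have jk: "j \<in> P" "k \<in> P" using that by (auto simp: S_def)
    have "(if j = k then v k else 0) = (\<Sum>i\<in>P. v i * (if i = j \<and> j = k then 1 else 0))"
      using jk P by (auto simp: if_distrib cong: if_cong)
    also have "\<dots> = (\<Sum>i\<in>P. v i * ((\<Sum>a\<in>A. f a i * g a j k) + (\<Sum>b\<in>B. f' b j * g' b i k)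
        + (\<Sum>c\<in>C. f'' c k * g'' c i j)))"
      using jk by (intro sum.cong) (simp_all add: decomposition)
    also have "\<dots> = (\<Sum>a\<in>A. (\<Sum>i\<in>P. v i * f a i) * g a j k)
        + (\<Sum>b\<in>B. f' b j * (\<Sum>i\<in>P. v i * g' b i k)) + (\<Sum>c\<in>C. (\<Sum>i\<in>P. v i * g'' c i j) * f'' c k)"
      by (simp add: distrib_left sum.distrib sum_distrib_left sum_distrib_right sum.swap[of _ P] mult_ac)
    also have "\<dots> = (\<Sum>x\<in>B <+> C. u x j * w x k)"
      using v(2) B C by (simp add: sum.Plus u_def w_def)
    finally show ?thesis .
  qed
  then have "card S \<le> card (B <+> C)"
    using P B C by (intro card_le_of_diagonal_factorization[where d = v]) (auto simp: S_def)
  with card_P B C show ?thesis by (simp add: S_def card_Plus)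
qed

section \<open>Tricoloured sum-free sets\<close>

lemma finite_field_power_card_minus_one:
  fixes z :: "'F::{field,finite}"
  assumes "z \<noteq> 0"
  shows "z ^ (CARD('F) - 1) = 1"
proof -
  let ?U = "UNIV - {0::'F}"
  \<comment> \<open>multiplication by \<open>z\<close> permutes the units\<close>
  have "inj_on ((*) z) ?U" using assms by (auto simp: inj_on_def)
  moreover have "(*) z ` ?U = ?U"
  proof
    show "?U \<subseteq> (*) z ` ?U"
    proof
      fix y assume "y \<in> ?U"
      then have "y = z * (y / z)" "y / z \<in> ?U" using assms by auto
      then show "y \<in> (*) z ` ?U" by blast
    qed
  qed (use assms in auto)
  ultimately have "prod id ?U = prod ((*) z) ?U"
    by (metis prod.reindex_cong id_apply)
  also have "\<dots> = z ^ card ?U * prod id ?U" by (simp add: prod.distrib)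
  finally have "z ^ card ?U = 1" by (simp add: prod_zero_iff)
  moreover have "card ?U = CARD('F) - 1" by (simp add: card_Diff_subset)
  ultimately show ?thesis by simp
qed

lemma finite_field_one_minus_power_card_minus_one:
  fixes u :: "'F::{field,finite}"
  shows "1 - u ^ (CARD('F) - 1) = (if u = 0 then 1 else 0)"
  using card_field_ge_2[where 'F = 'F] finite_field_power_card_minus_one[of u] by auto

lemma one_minus_trinomial_power_expansion:
  fixes N :: nat
  obtains E :: "(nat \<times> nat) option set" and e1 e2 e3 :: "(nat \<times> nat) option \<Rightarrow> nat"
    and \<kappa> :: "(nat \<times> nat) option \<Rightarrow> 'R::comm_ring_1"
  where "finite E" "\<And>\<tau>. \<tau> \<in> E \<Longrightarrow> e1 \<tau> + e2 \<tau> + e3 \<tau> \<le> N"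
    "\<And>u v w :: 'R. 1 - (u + v + w) ^ N = (\<Sum>\<tau>\<in>E. \<kappa> \<tau> * u ^ e1 \<tau> * v ^ e2 \<tau> * w ^ e3 \<tau>)"
proof -
  define D where "D = Sigma {..N} (\<lambda>i. {..N - i})"
  define c :: "nat \<times> nat \<Rightarrow> 'R" where "c ij = of_nat ((N choose fst ij) * (N - fst ij choose snd ij))" for ij
  have trinomial: "(u + v + w) ^ N =
      (\<Sum>ij\<in>D. c ij * u ^ fst ij * v ^ snd ij * w ^ (N - fst ij - snd ij))" for u v w :: 'R
  proof -
    have "(u + v + w) ^ N = (\<Sum>i\<le>N. of_nat (N choose i) * u ^ i * (v + w) ^ (N - i))"
      by (simp add: add.assoc binomial_ring)
    also have "\<dots> = (\<Sum>i\<le>N. \<Sum>j\<le>N - i.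
        of_nat (N choose i) * u ^ i * (of_nat (N - i choose j) * v ^ j * w ^ (N - i - j)))"
      by (simp add: binomial_ring sum_distrib_left)
    also have "\<dots> = (\<Sum>ij\<in>D. c ij * u ^ fst ij * v ^ snd ij * w ^ (N - fst ij - snd ij))"
      unfolding D_def c_def by (subst sum.Sigma) (auto simp: mult_ac case_prod_beta)
    finally show ?thesis .
  qed
  \<comment> \<open>\<open>None\<close> indexes the constant term, \<open>Some (i, j)\<close> the monomial \<open>u\<^sup>i v\<^sup>j w\<^sup>N\<^sup>-\<^sup>i\<^sup>-\<^sup>j\<close>\<close>
  define E where "E = insert None (Some ` D)"
  define \<kappa> :: "(nat \<times> nat) option \<Rightarrow> 'R" where "\<kappa> = case_option 1 (\<lambda>ij. - c ij)"
  define e1 :: "(nat \<times> nat) option \<Rightarrow> nat" where "e1 = case_option 0 fst"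
  define e2 :: "(nat \<times> nat) option \<Rightarrow> nat" where "e2 = case_option 0 snd"
  define e3 :: "(nat \<times> nat) option \<Rightarrow> nat" where "e3 = case_option 0 (\<lambda>ij. N - fst ij - snd ij)"
  show thesis
  proof
    show "finite E" by (simp add: E_def D_def)
    show "e1 \<tau> + e2 \<tau> + e3 \<tau> \<le> N" if "\<tau> \<in> E" for \<tau>
      using that by (auto simp: E_def D_def e1_def e2_def e3_def)
    show "1 - (u + v + w) ^ N = (\<Sum>\<tau>\<in>E. \<kappa> \<tau> * u ^ e1 \<tau> * v ^ e2 \<tau> * w ^ e3 \<tau>)" for u v w :: 'R
      unfolding trinomial E_def
      by (simp add: D_def sum.reindex \<kappa>_def e1_def e2_def e3_def sum_negf)
  qed
qed

lemma sum_group_factor: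
  fixes F :: "'e \<Rightarrow> 'R::comm_semiring_1"
  assumes "finite S" "finite M" "g ` S \<subseteq> M"
  shows "(\<Sum>\<sigma>\<in>S. F (g \<sigma>) * H \<sigma>) = (\<Sum>e\<in>M. F e * (\<Sum>\<sigma>\<in>{\<sigma>\<in>S. g \<sigma> = e}. H \<sigma>))"
proof -
  have "(\<Sum>e\<in>M. F e * (\<Sum>\<sigma>\<in>{\<sigma>\<in>S. g \<sigma> = e}. H \<sigma>)) =
      (\<Sum>e\<in>M. \<Sum>\<sigma>\<in>{\<sigma>\<in>S. g \<sigma> = e}. F (g \<sigma>) * H \<sigma>)"
    by (simp add: sum_distrib_left)
  also have "\<dots> = (\<Sum>\<sigma>\<in>S. F (g \<sigma>) * H \<sigma>)"
    by (rule sum.group[OF assms])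
  finally show ?thesis ..
qed

lemma sum_split_into_slices:
  fixes K :: "'s \<Rightarrow> 'R::comm_semiring_1" and F G H :: "'e \<Rightarrow> 'p \<Rightarrow> 'R"
  assumes S: "finite S" and M: "finite M"
    and covered: "\<And>\<sigma>. \<sigma> \<in> S \<Longrightarrow> eA \<sigma> \<in> M \<or> eB \<sigma> \<in> M \<or> eC \<sigma> \<in> M"
  obtains g1 g2 g3 where "\<And>i j k. (\<Sum>\<sigma>\<in>S. K \<sigma> * F (eA \<sigma>) i * G (eB \<sigma>) j * H (eC \<sigma>) k) =
      (\<Sum>e\<in>M. F e i * g1 e j k) + (\<Sum>e\<in>M. G e j * g2 e i k) + (\<Sum>e\<in>M. H e k * g3 e i j)"
proof
  define S1 where "S1 = {\<sigma>\<in>S. eA \<sigma> \<in> M}"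
  define S2 where "S2 = {\<sigma>\<in>S. eA \<sigma> \<notin> M \<and> eB \<sigma> \<in> M}"
  define S3 where "S3 = {\<sigma>\<in>S. eA \<sigma> \<notin> M \<and> eB \<sigma> \<notin> M}"
  have fin: "finite S1" "finite S2" "finite S3" using S by (simp_all add: S1_def S2_def S3_def)
  have img: "eA ` S1 \<subseteq> M" "eB ` S2 \<subseteq> M" "eC ` S3 \<subseteq> M"
    using covered by (auto simp: S1_def S2_def S3_def)
  fix i j k
  let ?X = "\<lambda>\<sigma>. K \<sigma> * F (eA \<sigma>) i * G (eB \<sigma>) j * H (eC \<sigma>) k"
  have "sum ?X S = sum ?X S1 + sum ?X S2 + sum ?X S3"
  proof -
    have "S = S1 \<union> (S2 \<union> S3)" "S1 \<inter> (S2 \<union> S3) = {}" "S2 \<inter> S3 = {}"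
      by (auto simp: S1_def S2_def S3_def)
    with fin show ?thesis by (simp add: sum.union_disjoint add.assoc)
  qed
  also have "sum ?X S1 = (\<Sum>\<sigma>\<in>S1. F (eA \<sigma>) i * (K \<sigma> * G (eB \<sigma>) j * H (eC \<sigma>) k))"
    by (simp add: mult_ac)
  also have "\<dots> = (\<Sum>e\<in>M. F e i * (\<Sum>\<sigma>\<in>{\<sigma>\<in>S1. eA \<sigma> = e}. K \<sigma> * G (eB \<sigma>) j * H (eC \<sigma>) k))"
    by (rule sum_group_factor[OF fin(1) M img(1)])
  also have "sum ?X S2 = (\<Sum>\<sigma>\<in>S2. G (eB \<sigma>) j * (K \<sigma> * F (eA \<sigma>) i * H (eC \<sigma>) k))"
    by (simp add: mult_ac)
  also have "\<dots> = (\<Sum>e\<in>M. G e j * (\<Sum>\<sigma>\<in>{\<sigma>\<in>S2. eB \<sigma> = e}. K \<sigma> * F (eA \<sigma>) i * H (eC \<sigma>) k))"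
    by (rule sum_group_factor[OF fin(2) M img(2)])
  also have "sum ?X S3 = (\<Sum>\<sigma>\<in>S3. H (eC \<sigma>) k * (K \<sigma> * F (eA \<sigma>) i * G (eB \<sigma>) j))"
    by (simp add: mult_ac)
  also have "\<dots> = (\<Sum>e\<in>M. H e k * (\<Sum>\<sigma>\<in>{\<sigma>\<in>S3. eC \<sigma> = e}. K \<sigma> * F (eA \<sigma>) i * G (eB \<sigma>) j))"
    by (rule sum_group_factor[OF fin(3) M img(3)])
  finally show "sum ?X S =
      (\<Sum>e\<in>M. F e i * (\<lambda>e j k. \<Sum>\<sigma>\<in>{\<sigma>\<in>S1. eA \<sigma> = e}. K \<sigma> * G (eB \<sigma>) j * H (eC \<sigma>) k) e j k)
      + (\<Sum>e\<in>M. G e j * (\<lambda>e i k. \<Sum>\<sigma>\<in>{\<sigma>\<in>S2. eB \<sigma> = e}. K \<sigma> * F (eA \<sigma>) i * H (eC \<sigma>) k) e i k)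
      + (\<Sum>e\<in>M. H e k * (\<lambda>e i j. \<Sum>\<sigma>\<in>{\<sigma>\<in>S3. eC \<sigma> = e}. K \<sigma> * F (eA \<sigma>) i * G (eB \<sigma>) j) e i j)"
    by simp
qed

lemma prod_expansion_over_PiE:
  fixes \<kappa> :: "'e \<Rightarrow> 'R::comm_semiring_1"
  assumes I: "finite I" and E: "finite E"
    and expansion: "\<And>u v w. f u v w = (\<Sum>\<tau>\<in>E. \<kappa> \<tau> * u ^ e1 \<tau> * v ^ e2 \<tau> * w ^ e3 \<tau>)"
  shows "(\<Prod>t\<in>I. f (u t) (v t) (w t)) = (\<Sum>\<sigma>\<in>I \<rightarrow>\<^sub>E E. (\<Prod>t\<in>I. \<kappa> (\<sigma> t))
    * (\<Prod>t\<in>I. u t ^ e1 (\<sigma> t)) * (\<Prod>t\<in>I. v t ^ e2 (\<sigma> t)) * (\<Prod>t\<in>I. w t ^ e3 (\<sigma> t)))"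
proof -
  have "(\<Prod>t\<in>I. f (u t) (v t) (w t)) = (\<Prod>t\<in>I. \<Sum>\<tau>\<in>E. \<kappa> \<tau> * u t ^ e1 \<tau> * v t ^ e2 \<tau> * w t ^ e3 \<tau>)"
    by (simp only: expansion)
  also have "\<dots> = (\<Sum>\<sigma>\<in>I \<rightarrow>\<^sub>E E. \<Prod>t\<in>I. \<kappa> (\<sigma> t) * u t ^ e1 (\<sigma> t) * v t ^ e2 (\<sigma> t) * w t ^ e3 (\<sigma> t))"
    by (rule prod_sum_PiE[OF I E])
  finally show ?thesis by (simp add: prod.distrib)
qed

definition low_degree_exponents :: "'i set \<Rightarrow> nat \<Rightarrow> ('i \<Rightarrow> nat) set" where
  "low_degree_exponents I q = {e \<in> I \<rightarrow>\<^sub>E {..<q}. 3 * (\<Sum>t\<in>I. e t) \<le> (q - 1) * card I}"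

lemma low_degree_exponents_cover:
  assumes "\<And>t. t \<in> I \<Longrightarrow> e1 t + e2 t + e3 t \<le> q - 1" "1 \<le> q"
  shows "restrict e1 I \<in> low_degree_exponents I q \<or> restrict e2 I \<in> low_degree_exponents I q
    \<or> restrict e3 I \<in> low_degree_exponents I q"
proof -
  have "restrict e I \<in> I \<rightarrow>\<^sub>E {..<q}" if "e \<in> {e1, e2, e3}" for e
    using that assms by fastforce
  moreover have "(\<Sum>t\<in>I. e1 t) + (\<Sum>t\<in>I. e2 t) + (\<Sum>t\<in>I. e3 t) \<le> (\<Sum>t\<in>I. q - 1)"
    unfolding sum.distrib[symmetric] by (rule sum_mono) (rule assms(1))
  ultimately show ?thesis by (auto simp: low_degree_exponents_def mult.commute)
qed

definition monomial_on :: "'i set \<Rightarrow> ('i \<Rightarrow> nat) \<Rightarrow> ('i \<Rightarrow> 'a::comm_semiring_1) \<Rightarrow> 'a" where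
  "monomial_on I e x = (\<Prod>t\<in>I. x t ^ e t)"

lemma tricolored_indicator_low_degree_expansion:
  fixes a b c :: "'p \<Rightarrow> 'i \<Rightarrow> 'F::{field,finite}"
  assumes I: "finite I"
    and sum_free: "\<And>i j k. i \<in> P \<Longrightarrow> j \<in> P \<Longrightarrow> k \<in> P \<Longrightarrow>
      (\<forall>t\<in>I. a i t + b j t + c k t = 0) \<longleftrightarrow> i = j \<and> j = k"
  obtains S :: "('i \<Rightarrow> (nat \<times> nat) option) set" and K eA eB eC
  where "finite S"
    "\<And>\<sigma>. \<sigma> \<in> S \<Longrightarrow> eA \<sigma> \<in> low_degree_exponents I CARD('F) \<or> eB \<sigma> \<in> low_degree_exponents I CARD('F)
      \<or> eC \<sigma> \<in> low_degree_exponents I CARD('F)"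
    "\<And>i j k. i \<in> P \<Longrightarrow> j \<in> P \<Longrightarrow> k \<in> P \<Longrightarrow> (if i = j \<and> j = k then 1 else 0) =
      (\<Sum>\<sigma>\<in>S. K \<sigma> * monomial_on I (eA \<sigma>) (a i) * monomial_on I (eB \<sigma>) (b j) * monomial_on I (eC \<sigma>) (c k))"
proof -
  define N where "N = CARD('F) - 1"
  obtain E e1 e2 e3 and \<kappa> :: "(nat \<times> nat) option \<Rightarrow> 'F" where E: "finite E"
    and degree: "\<And>\<tau>. \<tau> \<in> E \<Longrightarrow> e1 \<tau> + e2 \<tau> + e3 \<tau> \<le> N"
    and expansion: "\<And>u v w :: 'F. 1 - (u + v + w) ^ N = (\<Sum>\<tau>\<in>E. \<kappa> \<tau> * u ^ e1 \<tau> * v ^ e2 \<tau> * w ^ e3 \<tau>)"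
    by (rule one_minus_trinomial_power_expansion[where 'R = 'F, of N]) blast
  define exponent where "exponent e \<sigma> = restrict (e \<circ> \<sigma>) I"
    for e :: "(nat \<times> nat) option \<Rightarrow> nat" and \<sigma> :: "'i \<Rightarrow> (nat \<times> nat) option"
  define K where "K \<sigma> = (\<Prod>t\<in>I. \<kappa> (\<sigma> t))" for \<sigma> :: "'i \<Rightarrow> (nat \<times> nat) option"
  show thesis
  proof
    show "finite (I \<rightarrow>\<^sub>E E)" using I E by (rule finite_PiE)
    have "N < CARD('F)" using card_field_ge_2[where 'F = 'F] by (simp add: N_def)
    then show "exponent e1 \<sigma> \<in> low_degree_exponents I CARD('F) \<or> exponent e2 \<sigma> \<in> low_degree_exponents I CARD('F)
      \<or> exponent e3 \<sigma> \<in> low_degree_exponents I CARD('F)" if "\<sigma> \<in> I \<rightarrow>\<^sub>E E" for \<sigma>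
      unfolding exponent_def
      by (intro low_degree_exponents_cover) (use degree that in \<open>auto simp: N_def\<close>)
    fix i j k assume "i \<in> P" "j \<in> P" "k \<in> P"
    have "(if i = j \<and> j = k then 1 else 0) = (\<Prod>t\<in>I. if a i t + b j t + c k t = 0 then 1 else (0::'F))"
      using sum_free[OF \<open>i \<in> P\<close> \<open>j \<in> P\<close> \<open>k \<in> P\<close>] I by (auto simp: prod_zero_iff)
    also have "\<dots> = (\<Prod>t\<in>I. 1 - (a i t + b j t + c k t) ^ N)"
      unfolding N_def finite_field_one_minus_power_card_minus_one ..
    also have "\<dots> = (\<Sum>\<sigma>\<in>I \<rightarrow>\<^sub>E E. K \<sigma> * monomial_on I (exponent e1 \<sigma>) (a i)
        * monomial_on I (exponent e2 \<sigma>) (b j) * monomial_on I (exponent e3 \<sigma>) (c k))"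
      unfolding prod_expansion_over_PiE[OF I E expansion]
      by (simp add: K_def monomial_on_def exponent_def)
    finally show "(if i = j \<and> j = k then 1 else 0) = (\<Sum>\<sigma>\<in>I \<rightarrow>\<^sub>E E. K \<sigma> * monomial_on I (exponent e1 \<sigma>) (a i)
        * monomial_on I (exponent e2 \<sigma>) (b j) * monomial_on I (exponent e3 \<sigma>) (c k))" .
  qed
qed

theorem card_tricolored_sum_free_le:
  fixes a b c :: "'p \<Rightarrow> 'i \<Rightarrow> 'F::{field,finite}"
  assumes P: "finite P" and I: "finite I"
    and sum_free: "\<And>i j k. i \<in> P \<Longrightarrow> j \<in> P \<Longrightarrow> k \<in> P \<Longrightarrow>
      (\<forall>t\<in>I. a i t + b j t + c k t = 0) \<longleftrightarrow> i = j \<and> j = k"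
  shows "card P \<le> 3 * card (low_degree_exponents I CARD('F))"
proof -
  define M where "M = low_degree_exponents I CARD('F)"
  have M: "finite M" using I by (simp add: M_def low_degree_exponents_def finite_PiE)
  obtain S :: "('i \<Rightarrow> (nat \<times> nat) option) set" and K eA eB eC where S: "finite S"
    and covered: "\<And>\<sigma>. \<sigma> \<in> S \<Longrightarrow> eA \<sigma> \<in> M \<or> eB \<sigma> \<in> M \<or> eC \<sigma> \<in> M"
    and indicator: "\<And>i j k. i \<in> P \<Longrightarrow> j \<in> P \<Longrightarrow> k \<in> P \<Longrightarrow> (if i = j \<and> j = k then 1 else 0) =
      (\<Sum>\<sigma>\<in>S. K \<sigma> * monomial_on I (eA \<sigma>) (a i) * monomial_on I (eB \<sigma>) (b j) * monomial_on I (eC \<sigma>) (c k))"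
    unfolding M_def by (rule tricolored_indicator_low_degree_expansion[OF I sum_free]) blast+
  obtain g1 g2 g3 where slices: "\<And>i j k. (\<Sum>\<sigma>\<in>S.
      K \<sigma> * monomial_on I (eA \<sigma>) (a i) * monomial_on I (eB \<sigma>) (b j) * monomial_on I (eC \<sigma>) (c k)) =
      (\<Sum>e\<in>M. monomial_on I e (a i) * g1 e j k) + (\<Sum>e\<in>M. monomial_on I e (b j) * g2 e i k)
      + (\<Sum>e\<in>M. monomial_on I e (c k) * g3 e i j)"
    by (rule sum_split_into_slices[OF S M, of eA eB eC K "\<lambda>e i. monomial_on I e (a i)"
        "\<lambda>e j. monomial_on I e (b j)" "\<lambda>e k. monomial_on I e (c k)"]) (use covered in blast)+
  have "(if i = j \<and> j = k then 1 else 0) = (\<Sum>e\<in>M. monomial_on I e (a i) * g1 e j k)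
      + (\<Sum>e\<in>M. monomial_on I e (b j) * g2 e i k) + (\<Sum>e\<in>M. monomial_on I e (c k) * g3 e i j)"
    if "i \<in> P" "j \<in> P" "k \<in> P" for i j k
    unfolding indicator[OF that] slices ..
  then have "card P \<le> card M + card M + card M"
    by (rule slice_rank_diagonal_le[OF P M M M])
  then show ?thesis by (simp add: M_def)
qed

section \<open>The ratio defining \<open>\<Gamma>\<^sub>q\<close>\<close>

definition gamma_ratio :: "nat \<Rightarrow> real \<Rightarrow> real" where
  "gamma_ratio q x = (\<Sum>k<q. x ^ k) / x powr ((real q - 1) / 3)"

lemma gamma_ratio_pos: "0 < x \<Longrightarrow> 1 \<le> q \<Longrightarrow> 0 < gamma_ratio q x"
  unfolding gamma_ratio_def by (intro divide_pos_pos sum_pos2[of _ 0]) auto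

lemma gamma_ratio_one [simp]: "gamma_ratio q 1 = real q"
  by (simp add: gamma_ratio_def)

lemma sum_lessThan_of_nat_real: "(\<Sum>k<q. real k) * 2 = real q * (real q - 1)"
  by (induction q) (simp_all add: algebra_simps)

lemma gamma_ratio_less_card_near_one:
  assumes "2 \<le> q"
  obtains x where "0 < x" "x < 1" "gamma_ratio q x < real q"
proof -
  define c where "c = (real q - 1) / 3"
  have deriv: "((\<lambda>x. (\<Sum>k<q. x ^ k) / x powr c) has_real_derivative
      ((\<Sum>k<q. real k * 1 ^ (k - Suc 0)) * 1 powr c - (\<Sum>k<q. 1 ^ k) * (c * 1 powr (c - 1)))
        / (1 powr c * 1 powr c)) (at 1)"
    by (intro DERIV_divide DERIV_sum DERIV_pow has_real_derivative_powr) auto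
  have deriv_at_1: "((\<Sum>k<q. real k * 1 ^ (k - Suc 0)) * 1 powr c - (\<Sum>k<q. 1 ^ k) * (c * 1 powr (c - 1)))
      / (1 powr c * 1 powr c) = real q * (real q - 1) / 6"
    using sum_lessThan_of_nat_real[of q] by (simp add: c_def field_simps)
  have "gamma_ratio q = (\<lambda>x. (\<Sum>k<q. x ^ k) / x powr c)"
    by (simp add: gamma_ratio_def[abs_def] c_def)
  with deriv have "(gamma_ratio q has_real_derivative real q * (real q - 1) / 6) (at 1)"
    unfolding deriv_at_1 by simp
  then have "\<exists>d>0. \<forall>h>0. h < d \<longrightarrow> gamma_ratio q (1 - h) < gamma_ratio q 1"
    by (rule DERIV_pos_inc_left) (use assms in simp)
  then obtain d where "d > 0" "\<And>h. 0 < h \<Longrightarrow> h < d \<Longrightarrow> gamma_ratio q (1 - h) < gamma_ratio q 1"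
    by blast
  then have "gamma_ratio q (1 - min (d / 2) (1 / 2)) < real q" by simp
  with \<open>d > 0\<close> show ?thesis by (intro that) auto
qed

lemma card_le_gamma_ratio_near_zero:
  assumes "2 \<le> q" "0 < y" "y \<le> (1 / real q) powr (3 / (real q - 1))"
  shows "real q \<le> gamma_ratio q y"
proof -
  define c where "c = (real q - 1) / 3"
  have c: "0 < c" using assms(1) by (simp add: c_def)
  have "y powr c \<le> ((1 / real q) powr (1 / c)) powr c"
    using assms c by (intro powr_mono2) (auto simp: c_def)
  also have "\<dots> = 1 / real q" using c by (simp add: powr_powr)
  finally have "real q \<le> 1 / y powr c" using assms(1,2) by (simp add: field_simps)
  also have "\<dots> \<le> (\<Sum>k<q. y ^ k) / y powr c"
  proof (rule divide_right_mono)
    have "(\<Sum>k\<in>{0}. y ^ k) \<le> (\<Sum>k<q. y ^ k)" using assms by (intro sum_mono2) auto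
    then show "1 \<le> (\<Sum>k<q. y ^ k)" by simp
  qed simp
  finally show ?thesis by (simp add: gamma_ratio_def c_def)
qed

lemma gamma_ratio_attains_minimum:
  assumes "2 \<le> q"
  obtains x0 where "0 < x0" "x0 < 1" "\<And>y. 0 < y \<Longrightarrow> y < 1 \<Longrightarrow> gamma_ratio q x0 \<le> gamma_ratio q y"
proof -
  define a where "a = (1 / real q) powr (3 / (real q - 1))"
  have "a < 1 powr (3 / (real q - 1))"
    unfolding a_def using assms by (intro powr_less_mono2) auto
  then have a: "0 < a" "a < 1" using assms by (auto simp: a_def)
  obtain x1 where x1: "0 < x1" "x1 < 1" "gamma_ratio q x1 < real q"
    using gamma_ratio_less_card_near_one[OF assms] .
  \<comment> \<open>a minimum over \<open>[a, 1]\<close> is global, since \<open>gamma_ratio q \<ge> q\<close> on \<open>(0, a]\<close> and \<open>gamma_ratio q 1 = q\<close>\<close>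
  have "continuous_on {a..1} (gamma_ratio q)"
    unfolding gamma_ratio_def using a by (intro continuous_intros) auto
  then have "\<exists>x0\<in>{a..1}. \<forall>y\<in>{a..1}. gamma_ratio q x0 \<le> gamma_ratio q y"
    using a by (intro continuous_attains_inf) auto
  then obtain x0 where x0: "x0 \<in> {a..1}" "\<And>y. y \<in> {a..1} \<Longrightarrow> gamma_ratio q x0 \<le> gamma_ratio q y"
    by blast
  have "a < x1"
    using card_le_gamma_ratio_near_zero[OF assms x1(1)] x1(3) unfolding a_def by linarith
  then have "gamma_ratio q x0 < real q" using x0(2)[of x1] x1 by auto
  then have "x0 \<noteq> 1" by auto
  show ?thesis
  proof
    show "0 < x0" "x0 < 1" using x0(1) a \<open>x0 \<noteq> 1\<close> by auto
    show "gamma_ratio q x0 \<le> gamma_ratio q y" if "0 < y" "y < 1" for y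
    proof (cases "a \<le> y")
      case False
      then show ?thesis
        using card_le_gamma_ratio_near_zero[OF assms \<open>0 < y\<close>] \<open>gamma_ratio q x0 < real q\<close>
        unfolding a_def by linarith
    qed (use x0(2) that in auto)
  qed
qed

lemma Gamma_q_eq_gamma_ratio:
  assumes "2 \<le> q"
  obtains x0 where "0 < x0" "x0 < 1" "Gamma_q q = gamma_ratio q x0"
proof -
  obtain x0 where x0: "0 < x0" "x0 < 1" and min: "\<And>y. 0 < y \<Longrightarrow> y < 1 \<Longrightarrow> gamma_ratio q x0 \<le> gamma_ratio q y"
    by (rule gamma_ratio_attains_minimum[OF assms]) blast
  have "Gamma_q q = (INF x\<in>{0<..<1}. gamma_ratio q x)"
    using assms by (simp add: Gamma_q_def J_def gamma_ratio_def)
  also have "\<dots> = gamma_ratio q x0"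
    unfolding image_def by (rule cInf_eq_minimum) (use x0 min in auto)
  finally show ?thesis using x0 that by blast
qed

section \<open>Anticoncentration of coefficients\<close>

lemma central_binomial_Suc: "Suc m * (2 * Suc m choose Suc m) = 2 * (2 * m + 1) * (2 * m choose m)"
proof -
  have "Suc m * ((2 * m + 1) choose m) = Suc m * (Suc (2 * m) choose Suc m)"
    using binomial_symmetric[of m "2 * m + 1"] by simp
  also have "\<dots> = (2 * m + 1) * (2 * m choose m)"
    by (simp only: Suc_times_binomial) simp
  finally have odd: "Suc m * ((2 * m + 1) choose m) = (2 * m + 1) * (2 * m choose m)" .
  have "Suc m * (Suc m * (2 * Suc m choose Suc m)) = Suc m * (Suc (2 * m + 1) choose Suc m) * Suc m"
    by (simp del: binomial_Suc_Suc)
  also have "\<dots> = Suc (2 * m + 1) * (Suc m * ((2 * m + 1) choose m))"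
    by (simp only: Suc_times_binomial mult_ac)
  also have "\<dots> = Suc m * (2 * (2 * m + 1) * (2 * m choose m))"
    by (simp only: odd) (simp add: algebra_simps)
  finally show ?thesis by (metis Zero_not_Suc mult_left_cancel)
qed

lemma central_binomial_square_bound: "(2 * m choose m)\<^sup>2 * (2 * m + 1) \<le> (16::nat) ^ m"
proof (induction m)
  case (Suc m)
  let ?C = "2 * m choose m" and ?C' = "2 * Suc m choose Suc m"
  have "(Suc m)\<^sup>2 * (?C'\<^sup>2 * (2 * Suc m + 1)) = (Suc m * ?C')\<^sup>2 * (2 * m + 3)"
    by (simp add: power2_eq_square algebra_simps)
  also have "\<dots> = 4 * (2 * m + 1) * (2 * m + 3) * (?C\<^sup>2 * (2 * m + 1))"
    unfolding central_binomial_Suc power2_eq_square by algebra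
  also have "\<dots> \<le> 4 * (2 * m + 1) * (2 * m + 3) * 16 ^ m"
    using Suc.IH by simp
  also have "\<dots> \<le> 16 * (Suc m)\<^sup>2 * 16 ^ m"
    by (intro mult_right_mono) (simp_all add: power2_eq_square algebra_simps)
  finally have "(Suc m)\<^sup>2 * (?C'\<^sup>2 * (2 * Suc m + 1)) \<le> (Suc m)\<^sup>2 * 16 ^ Suc m"
    by (simp add: mult_ac)
  then show ?case by simp
qed simp

lemma binomial_square_bound: "(K choose j) ^ 2 * (K + 1) \<le> 2 * (4::nat) ^ K"
proof -
  obtain m where "K = 2 * m \<or> K = 2 * m + 1" by (metis oddE evenE)
  then show ?thesis
  proof
    assume K: "K = 2 * m"
    have "(K choose j) \<le> (2 * m) choose m" unfolding K by (rule binomial_maximum')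
    then have "(K choose j) ^ 2 * (K + 1) \<le> ((2 * m) choose m) ^ 2 * (2 * m + 1)"
      unfolding K by (intro mult_le_mono power_mono) auto
    also have "\<dots> \<le> 16 ^ m" by (rule central_binomial_square_bound)
    also have "(16::nat) ^ m = 4 ^ K" unfolding K by (simp add: power_mult)
    finally show ?thesis by simp
  next
    assume K: "K = 2 * m + 1"
    define C where "C = (2 * m) choose m"
    have Cpos: "1 \<le> C" unfolding C_def by (simp add: Suc_leI)
    have "(K choose j) \<le> 2 * C"
    proof (cases j)
      case 0 then show ?thesis using Cpos by simp
    next
      case (Suc j')
      have "(K choose j) = ((2 * m) choose j') + ((2 * m) choose Suc j')" unfolding K Suc by simp
      also have "\<dots> \<le> C + C" unfolding C_def by (intro add_mono binomial_maximum')
      finally show ?thesis by simp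
    qed
    then have "(K choose j) ^ 2 * (K + 1) \<le> (2 * C) ^ 2 * (2 * m + 2)"
      unfolding K by (intro mult_le_mono power_mono) auto
    also have "\<dots> = 4 * (C ^ 2 * (2 * m + 2))" by (simp add: power2_eq_square algebra_simps)
    also have "C ^ 2 * (2 * m + 2) \<le> 2 * (C ^ 2 * (2 * m + 1))" by (simp add: algebra_simps)
    also have "C ^ 2 * (2 * m + 1) \<le> 16 ^ m" unfolding C_def by (rule central_binomial_square_bound)
    finally have "(K choose j) ^ 2 * (K + 1) \<le> 8 * 16 ^ m" by simp
    also have "8 * (16::nat) ^ m = 2 * 4 ^ K" unfolding K by (simp add: power_mult)
    finally show ?thesis .
  qed
qed

lemma binomial_over_power_square_le: "(real (K choose j) / 2 ^ K) ^ 2 \<le> 2 / (real K + 1)"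
proof -
  have "real ((K choose j) ^ 2 * (K + 1)) \<le> real (2 * 4 ^ K)" using binomial_square_bound of_nat_le_iff by blast
  then have "real (K choose j) ^ 2 * (real K + 1) \<le> 2 * 4 ^ K" by (simp add: algebra_simps)
  moreover have "(4::real) ^ K = (2 ^ K) ^ 2"
  proof -
    have "(2::real) ^ K * 2 ^ K = (2*2) ^ K" by (simp only: power_mult_distrib)
    then show ?thesis by (simp add: power2_eq_square)
  qed
  ultimately have "real (K choose j) ^ 2 * (real K + 1) \<le> 2 * (2 ^ K) ^ 2" by simp
  then show ?thesis by (simp add: power_divide field_simps)
qed

lemma binomial_weights_sum:
  fixes a :: real
  shows "(\<Sum>K\<le>N. real (N choose K) * a ^ K * (1 - a) ^ (N - K)) = 1"
  using binomial_ring[of a "1 - a" N] by simp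

lemma binomial_weights_inverse_bound:
  fixes a :: real
  assumes "0 < a" "a < 1"
  shows "(\<Sum>K\<le>N. real (N choose K) * a ^ K * (1 - a) ^ (N - K) / (real K + 1)) \<le> 1 / ((real N + 1) * a)"
proof -
  define f where "f j = real (Suc N choose j) * a ^ j * (1 - a) ^ (Suc N - j)" for j
  have fnn: "0 \<le> f j" for j unfolding f_def using assms by simp
  have "(\<Sum>K\<le>N. real (N choose K) * a ^ K * (1 - a) ^ (N - K) / (real K + 1)) = (\<Sum>K\<le>N. f (Suc K) / ((real N + 1) * a))"
  proof (intro sum.cong refl)
    fix K assume "K \<in> {..N}"
    have e: "real (Suc K) * real (Suc N choose Suc K) = real (Suc N) * real (N choose K)"
      using Suc_times_binomial[of K N] by (metis of_nat_mult)
    then have e': "real (Suc N choose Suc K) = (real N + 1) * real (N choose K) / (real K + 1)"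
      by (simp del: binomial_Suc_Suc add: field_simps)
    show "real (N choose K) * a ^ K * (1 - a) ^ (N - K) / (real K + 1) = f (Suc K) / ((real N + 1) * a)"
    proof -
      have p: "real K + 1 > 0" "real N + 1 > 0" by simp_all
      have "f (Suc K) = real (Suc N choose Suc K) * (a * a ^ K) * (1 - a) ^ (N - K)" unfolding f_def by simp
      also have "\<dots> = ((real N + 1) * a) * (real (N choose K) * a ^ K * (1 - a) ^ (N - K) / (real K + 1))"
        unfolding e' by (simp add: field_simps)
      finally show ?thesis using assms p by simp
    qed
  qed
  also have "\<dots> = (\<Sum>K\<le>N. f (Suc K)) / ((real N + 1) * a)" by (simp add: sum_divide_distrib)
  also have "(\<Sum>K\<le>N. f (Suc K)) \<le> 1"
  proof -
    have "(\<Sum>K\<le>Suc N. f K) = f 0 + (\<Sum>K\<le>N. f (Suc K))" by (rule sum.atMost_Suc_shift)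
    moreover have "(\<Sum>K\<le>Suc N. f K) = 1" unfolding f_def by (rule binomial_weights_sum)
    ultimately show ?thesis using fnn[of 0] by linarith
  qed
  then have "(\<Sum>K\<le>N. f (Suc K)) / ((real N + 1) * a) \<le> 1 / ((real N + 1) * a)"
    using assms by (intro divide_right_mono) auto
  finally show ?thesis .
qed

lemma coeff_mult_nonneg:
  fixes p r :: "real poly"
  assumes "\<And>i. 0 \<le> coeff p i" "\<And>i. 0 \<le> coeff r i"
  shows "0 \<le> coeff (p * r) n"
  unfolding coeff_mult using assms by (intro sum_nonneg mult_nonneg_nonneg) auto

lemma coeff_power_nonneg:
  fixes p :: "real poly"
  assumes "\<And>i. 0 \<le> coeff p i"
  shows "0 \<le> coeff (p ^ k) n"
proof (induction k arbitrary: n)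
  case 0 then show ?case by (simp add: coeff_1)
next
  case (Suc k) then show ?case using assms by (simp add: coeff_mult_nonneg)
qed

lemma sum_coeff_le_poly_one:
  fixes r :: "real poly"
  assumes "\<And>i. 0 \<le> coeff r i"
  shows "(\<Sum>i\<le>s. coeff r i) \<le> poly r 1"
proof -
  define d where "d = degree r"
  have "(\<Sum>i\<le>s. coeff r i) \<le> (\<Sum>i\<le>max s d. coeff r i)"
    using assms by (intro sum_mono2) auto
  also have "\<dots> = (\<Sum>i\<le>d. coeff r i)"
  proof (rule sum.mono_neutral_right)
    show "\<forall>i\<in>{..max s d} - {..d}. coeff r i = 0" unfolding d_def by (auto intro: coeff_eq_0)
  qed auto
  also have "\<dots> = poly r 1" unfolding d_def by (simp add: poly_altdef)
  finally show ?thesis .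
qed

lemma coeff_mult_le_poly_one:
  fixes p r :: "real poly"
  assumes "\<And>i. 0 \<le> coeff p i" "\<And>i. coeff p i \<le> \<beta>" "\<And>i. 0 \<le> coeff r i"
  shows "coeff (p * r) s \<le> \<beta> * poly r 1"
proof -
  have b: "0 \<le> \<beta>" using assms(1)[of 0] assms(2)[of 0] by linarith
  have "coeff (p * r) s = coeff (r * p) s" by (simp add: mult.commute)
  also have "\<dots> = (\<Sum>i\<le>s. coeff r i * coeff p (s - i))" by (rule coeff_mult)
  also have "\<dots> \<le> (\<Sum>i\<le>s. coeff r i * \<beta>)"
    using assms by (intro sum_mono mult_left_mono) auto
  also have "\<dots> = \<beta> * (\<Sum>i\<le>s. coeff r i)" by (simp add: sum_distrib_left mult.commute)
  also have "\<dots> \<le> \<beta> * poly r 1" using b sum_coeff_le_poly_one[OF assms(3)] by (rule mult_left_mono[rotated])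
  finally show ?thesis .
qed

lemma coeff_mixture_power_le:
  fixes B R :: "real poly" and a :: real
  assumes a: "0 < a" "a < 1"
    and Bnn: "\<And>K j. 0 \<le> coeff (B ^ K) j" and Bb: "\<And>K j. coeff (B ^ K) j \<le> \<beta> K"
    and Rnn: "\<And>i. 0 \<le> coeff R i" and R1: "poly R 1 = 1"
  shows "coeff ((smult a B + smult (1 - a) R) ^ N) s \<le> (\<Sum>K\<le>N. real (N choose K) * a ^ K * (1 - a) ^ (N - K) * \<beta> K)"
proof -
  have "(smult a B + smult (1 - a) R) ^ N = (\<Sum>K\<le>N. of_nat (N choose K) * (smult a B) ^ K * (smult (1 - a) R) ^ (N - K))"
    by (rule binomial_ring)
  also have "\<dots> = (\<Sum>K\<le>N. smult (real (N choose K) * a ^ K * (1 - a) ^ (N - K)) (B ^ K * R ^ (N - K)))"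
    by (intro sum.cong refl) (simp add: smult_power of_nat_poly mult_ac)
  finally have e: "coeff ((smult a B + smult (1 - a) R) ^ N) s = (\<Sum>K\<le>N. real (N choose K) * a ^ K * (1 - a) ^ (N - K) * coeff (B ^ K * R ^ (N - K)) s)"
    by (simp add: coeff_sum)
  have "coeff (B ^ K * R ^ (N - K)) s \<le> \<beta> K" for K
  proof -
    have "coeff (B ^ K * R ^ (N - K)) s \<le> \<beta> K * poly (R ^ (N - K)) 1"
      using Bnn Bb coeff_power_nonneg[OF Rnn] by (rule coeff_mult_le_poly_one)
    then show ?thesis using R1 by simp
  qed
  then have "(\<Sum>K\<le>N. real (N choose K) * a ^ K * (1 - a) ^ (N - K) * coeff (B ^ K * R ^ (N - K)) s) \<le>
      (\<Sum>K\<le>N. real (N choose K) * a ^ K * (1 - a) ^ (N - K) * \<beta> K)"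
    using a by (intro sum_mono mult_left_mono) auto
  then show ?thesis using e by simp
qed

lemma coeff_half_half_power:
  "coeff ([:1/2, 1/2 :: real:] ^ K) j = (if j \<le> K then real (K choose j) / 2 ^ K else 0)"
proof (cases "j \<le> K")
  case True
  then have "coeff ([:1/2, 1/2 :: real:] ^ K) j = real (K choose j) * (1/2) ^ j * (1/2) ^ (K - j)"
    by (rule coeff_linear_poly_power)
  also have "\<dots> = real (K choose j) * (1/2) ^ (j + (K - j))" by (simp add: power_add)
  also have "\<dots> = real (K choose j) / 2 ^ K" using True by (simp add: power_divide)
  finally show ?thesis using True by simp
next
  case False
  have "degree ([:1/2, 1/2 :: real:] ^ K) \<le> degree [:1/2, 1/2 :: real:] * K"
    by (rule degree_power_le)
  then have "degree ([:1/2, 1/2 :: real:] ^ K) \<le> K" by simp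
  then show ?thesis using False by (simp add: coeff_eq_0)
qed

lemma coeff_half_half_power_le:
  assumes "0 < \<delta>" "2 / \<delta>\<^sup>2 \<le> real K"
  shows "coeff ([:1/2, 1/2 :: real:] ^ K) j \<le> \<delta>"
proof (cases "j \<le> K")
  case True
  have "(real (K choose j) / 2 ^ K)\<^sup>2 \<le> 2 / (real K + 1)"
    by (rule binomial_over_power_square_le)
  also have "\<dots> \<le> 2 / (2 / \<delta>\<^sup>2)"
    by (rule divide_left_mono) (use assms in \<open>simp_all add: add_pos_nonneg\<close>)
  also have "\<dots> = \<delta>\<^sup>2" using assms(1) by simp
  finally have "real (K choose j) / 2 ^ K \<le> \<delta>"
    by (rule power2_le_imp_le) (use assms(1) in simp)
  then show ?thesis using True by (simp add: coeff_half_half_power)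
next
  case False
  then show ?thesis using assms(1) by (simp add: coeff_half_half_power)
qed

lemma coeff_half_half_power_nonneg: "0 \<le> coeff ([:1/2, 1/2 :: real:] ^ K) j"
  by (simp add: coeff_half_half_power)

lemma coeff_half_half_power_le_one: "coeff ([:1/2, 1/2 :: real:] ^ K) j \<le> 1"
proof -
  have "real (K choose j) \<le> 2 ^ K"
    using binomial_le_pow2[of K j] by (metis of_nat_le_iff of_nat_numeral of_nat_power)
  then show ?thesis by (simp add: coeff_half_half_power)
qed

lemma coeff_mixture_half_half_power_small:
  fixes R :: "real poly"
  assumes a: "0 < a" "a < 1" and R: "\<And>i. 0 \<le> coeff R i" "poly R 1 = 1" and \<theta>: "0 < \<theta>"
  obtains N0 where "\<And>N s. N0 \<le> N \<Longrightarrow> coeff ((smult a [:1/2, 1/2:] + smult (1 - a) R) ^ N) s \<le> \<theta>"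
proof -
  define \<delta> where "\<delta> = \<theta> / 2"
  have \<delta>: "0 < \<delta>" using \<theta> by (simp add: \<delta>_def)
  define K0 where "K0 = nat \<lceil>2 / \<delta>\<^sup>2\<rceil>"
  define \<beta> where "\<beta> K = (if K0 \<le> K then \<delta> else 1)" for K
  have coeff_le_\<beta>: "coeff ([:1/2, 1/2:] ^ K) j \<le> \<beta> K" for K j
    using coeff_half_half_power_le[OF \<delta>, of K j] coeff_half_half_power_le_one[of K j]
    by (simp add: \<beta>_def K0_def)
  have \<beta>_le: "\<beta> K \<le> \<delta> + real K0 / (real K + 1)" for K
  proof (cases "K0 \<le> K")
    case False
    then have "1 \<le> real K0 / (real K + 1)" by simp
    moreover have "\<beta> K = 1" using False by (simp add: \<beta>_def)
    ultimately show ?thesis using \<delta> by linarith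
  qed (simp add: \<beta>_def)
  \<comment> \<open>in the \<open>N\<close>-th power the number \<open>K\<close> of factors \<open>[:1/2, 1/2:]\<close> is binomially distributed,
    and exceeds \<open>K0\<close> with high probability\<close>
  show ?thesis
  proof (rule that[of "nat \<lceil>real K0 / (a * \<delta>)\<rceil>"])
    fix N s assume N: "nat \<lceil>real K0 / (a * \<delta>)\<rceil> \<le> N"
    define w where "w K = real (N choose K) * a ^ K * (1 - a) ^ (N - K)" for K
    have "coeff ((smult a [:1/2, 1/2:] + smult (1 - a) R) ^ N) s \<le> (\<Sum>K\<le>N. w K * \<beta> K)"
      unfolding w_def by (rule coeff_mixture_power_le[OF a coeff_half_half_power_nonneg coeff_le_\<beta> R])
    also have "\<dots> \<le> (\<Sum>K\<le>N. w K * (\<delta> + real K0 / (real K + 1)))"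
      using a \<beta>_le by (intro sum_mono mult_left_mono) (simp_all add: w_def)
    also have "\<dots> = \<delta> * (\<Sum>K\<le>N. w K) + real K0 * (\<Sum>K\<le>N. w K / (real K + 1))"
      by (simp add: distrib_left sum.distrib sum_distrib_left mult_ac)
    also have "(\<Sum>K\<le>N. w K) = 1" unfolding w_def by (rule binomial_weights_sum)
    also have "real K0 * (\<Sum>K\<le>N. w K / (real K + 1)) \<le> real K0 * (1 / ((real N + 1) * a))"
      unfolding w_def by (intro mult_left_mono binomial_weights_inverse_bound[OF a]) simp
    also have "real K0 * (1 / ((real N + 1) * a)) \<le> \<delta>"
    proof -
      have "real K0 / (a * \<delta>) \<le> real N + 1" using N by linarith
      then have "real K0 \<le> (real N + 1) * a * \<delta>" using a \<delta> by (simp add: field_simps)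
      moreover have "0 < (real N + 1) * a" using a by simp
      ultimately show ?thesis by (simp add: pos_divide_le_eq mult_ac)
    qed
    finally show "coeff ((smult a [:1/2, 1/2:] + smult (1 - a) R) ^ N) s \<le> \<theta>"
      by (simp add: \<delta>_def)
  qed
qed

definition geom_poly :: "nat \<Rightarrow> real \<Rightarrow> real poly" where
  "geom_poly q x = (\<Sum>k<q. monom (x ^ k) k)"

lemma coeff_geom_poly: "coeff (geom_poly q x) k = (if k < q then x ^ k else 0)"
  by (simp add: geom_poly_def coeff_sum)

lemma poly_geom_poly_one: "poly (geom_poly q x) 1 = (\<Sum>k<q. x ^ k)"
  by (simp add: geom_poly_def poly_sum poly_monom)

lemma geom_poly_mixture_decomposition:
  assumes x: "0 < x" "x < 1" and q: "2 \<le> q"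
  obtains a R where "0 < a" "a < 1" "\<And>i. 0 \<le> coeff R i" "poly R 1 = 1"
    "smult (1 / (\<Sum>k<q. x ^ k)) (geom_poly q x) = smult a [:1/2, 1/2:] + smult (1 - a) R"
proof -
  define S where "S = (\<Sum>k<q. x ^ k)"
  have "(\<Sum>k\<in>{0, 1}. x ^ k) \<le> S" unfolding S_def using q x by (intro sum_mono2) auto
  then have S: "1 + x \<le> S" by simp
  \<comment> \<open>the weight \<open>a\<close> is chosen so that \<open>a/2\<close> fits under both of the coefficients \<open>1/S\<close> and \<open>x/S\<close>\<close>
  define a where "a = 2 * x / S"
  have a: "0 < a" "a < 1" using x S by (auto simp: a_def field_simps)
  define Q where "Q = smult (1 / S) (geom_poly q x)"
  define B :: "real poly" where "B = [:1/2, 1/2:]"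
  define R where "R = smult (1 / (1 - a)) (Q - smult a B)"
  have "0 \<le> coeff R i" for i
  proof -
    have "coeff R i = (coeff Q i - a * coeff B i) / (1 - a)" by (simp add: R_def)
    moreover have "a * coeff B i \<le> coeff Q i"
      using q x S by (cases "i = 0 \<or> i = 1")
        (auto simp: B_def Q_def a_def coeff_geom_poly coeff_pCons divide_le_cancel split: nat.splits)
    ultimately show ?thesis using a by simp
  qed
  moreover have "poly R 1 = 1"
    using a S x by (simp add: R_def Q_def B_def poly_geom_poly_one S_def[symmetric])
  moreover have "Q = smult a B + smult (1 - a) R"
    using a by (simp add: R_def)
  ultimately show ?thesis using a that unfolding Q_def B_def S_def by blast
qed

lemma coeff_geom_poly_power_small:
  assumes "0 < x" "x < 1" "2 \<le> q" "0 < \<theta>"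
  obtains N0 where "\<And>N s. N0 \<le> N \<Longrightarrow> coeff (geom_poly q x ^ N) s \<le> \<theta> * (\<Sum>k<q. x ^ k) ^ N"
proof -
  define S where "S = (\<Sum>k<q. x ^ k)"
  have S: "0 < S" unfolding S_def using assms by (intro sum_pos2[of _ 0]) auto
  obtain a R where a: "0 < a" "a < 1" and R: "\<And>i. 0 \<le> coeff R i" "poly R 1 = 1"
    and decomposition: "smult (1 / S) (geom_poly q x) = smult a [:1/2, 1/2:] + smult (1 - a) R"
    using geom_poly_mixture_decomposition[OF assms(1-3)] unfolding S_def by blast
  obtain N0 where N0: "\<And>N s. N0 \<le> N \<Longrightarrow> coeff ((smult a [:1/2, 1/2:] + smult (1 - a) R) ^ N) s \<le> \<theta>"
    using coeff_mixture_half_half_power_small[OF a R assms(4)] by blast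
  show ?thesis
  proof
    fix N s assume "N0 \<le> N"
    have "geom_poly q x = smult S (smult (1 / S) (geom_poly q x))" using S by simp
    also have "\<dots> = smult S (smult a [:1/2, 1/2:] + smult (1 - a) R)" by (simp only: decomposition)
    finally have "geom_poly q x = smult S (smult a [:1/2, 1/2:] + smult (1 - a) R)" .
    then have "coeff (geom_poly q x ^ N) s = S ^ N * coeff ((smult a [:1/2, 1/2:] + smult (1 - a) R) ^ N) s"
      by (simp add: smult_power)
    also have "\<dots> \<le> S ^ N * \<theta>" using N0[OF \<open>N0 \<le> N\<close>] S by (intro mult_left_mono) auto
    finally show "coeff (geom_poly q x ^ N) s \<le> \<theta> * (\<Sum>k<q. x ^ k) ^ N"
      by (simp add: S_def mult.commute)
  qed
qed

section \<open>Counting low-degree monomials\<close>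

lemma prod_monom:
  fixes f :: "'i \<Rightarrow> 'a::comm_semiring_1"
  assumes "finite A"
  shows "(\<Prod>t\<in>A. monom (f t) (g t)) = monom (\<Prod>t\<in>A. f t) (\<Sum>t\<in>A. g t)"
  using assms by (induction A rule: finite_induct) (simp_all add: mult_monom)

lemma coeff_geom_poly_power_card:
  assumes I: "finite I"
  shows "coeff (geom_poly q x ^ card I) s = real (card {e \<in> I \<rightarrow>\<^sub>E {..<q}. (\<Sum>t\<in>I. e t) = s}) * x ^ s"
proof -
  define X where "X = I \<rightarrow>\<^sub>E {..<q}"
  have X: "finite X" unfolding X_def using I by (simp add: finite_PiE)
  have "geom_poly q x ^ card I = (\<Prod>t\<in>I. \<Sum>k<q. monom (x ^ k) k)" by (simp add: geom_poly_def)
  also have "\<dots> = (\<Sum>e\<in>X. \<Prod>t\<in>I. monom (x ^ e t) (e t))"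
    unfolding X_def using I by (intro prod_sum_PiE) auto
  also have "\<dots> = (\<Sum>e\<in>X. monom (x ^ (\<Sum>t\<in>I. e t)) (\<Sum>t\<in>I. e t))"
    using I by (simp add: prod_monom power_sum)
  finally have "coeff (geom_poly q x ^ card I) s = (\<Sum>e\<in>X. if (\<Sum>t\<in>I. e t) = s then x ^ s else 0)"
    by (simp add: coeff_sum coeff_monom cong: if_cong)
  also have "\<dots> = real (card {e \<in> X. (\<Sum>t\<in>I. e t) = s}) * x ^ s"
    using X by (simp add: sum.If_cases Int_def)
  finally show ?thesis unfolding X_def .
qed

lemma sum_inverse_powers_le:
  fixes x :: real
  assumes "0 < x" "x < 1"
  shows "(1 - x) * (\<Sum>s\<le>m. (1 / x) ^ s) \<le> (1 / x) ^ m"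
proof (induction m)
  case (Suc m)
  have "(1 - x) * (\<Sum>s\<le>Suc m. (1 / x) ^ s) = (1 - x) * (\<Sum>s\<le>m. (1 / x) ^ s) + (1 - x) * (1 / x) ^ Suc m"
    by (simp add: distrib_left)
  also have "\<dots> \<le> (1 / x) ^ m + (1 - x) * (1 / x) ^ Suc m" using Suc by simp
  also have "(1 - x) * (1 / x) ^ Suc m = (1 / x) ^ Suc m - (1 / x) ^ m" using assms by (simp add: field_simps)
  finally show ?case by simp
qed (use assms in simp)

lemma inverse_power_le_inverse_powr_power:
  fixes x :: real
  assumes "0 < x" "x < 1" "real m \<le> c * real N"
  shows "(1 / x) ^ m \<le> (1 / x powr c) ^ N"
proof -
  have "(1 / x) ^ m = (1 / x) powr real m" using assms by (simp add: powr_realpow)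
  also have "\<dots> \<le> (1 / x) powr (c * real N)" using assms by (intro powr_mono) auto
  also have "\<dots> = ((1 / x) powr c) ^ N" using assms by (simp add: powr_powr powr_realpow[symmetric])
  also have "\<dots> = (1 / x powr c) ^ N" using assms by (simp add: powr_divide)
  finally show ?thesis .
qed

lemma card_low_degree_exponents_le:
  fixes x \<theta> :: real
  assumes I: "finite I" and x: "0 < x" "x < 1" and q: "2 \<le> q" and \<theta>: "0 \<le> \<theta>"
    and small_coeffs: "\<And>s. coeff (geom_poly q x ^ card I) s \<le> \<theta> * (\<Sum>k<q. x ^ k) ^ card I"
  shows "real (card (low_degree_exponents I q)) \<le> \<theta> * gamma_ratio q x ^ card I / (1 - x)"
proof -
  define N where "N = card I"
  define S where "S = (\<Sum>k<q. x ^ k)"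
  define X where "X = I \<rightarrow>\<^sub>E {..<q}"
  define m where "m = (q - 1) * N div 3"
  have X: "finite X" unfolding X_def using I by (simp add: finite_PiE)
  have S: "0 < S" unfolding S_def using q x by (intro sum_pos2[of _ 0]) auto
  have low: "low_degree_exponents I q = {e \<in> X. (\<Sum>t\<in>I. e t) \<le> m}"
    by (auto simp: low_degree_exponents_def X_def m_def N_def)
  \<comment> \<open>count the exponent vectors by their degree \<open>s\<close>, weighting degree \<open>s\<close> by \<open>x ^ s\<close>\<close>
  have "card (low_degree_exponents I q) = (\<Sum>s\<le>m. card {e \<in> X. (\<Sum>t\<in>I. e t) = s})"
    unfolding low card_eq_sum using X
    by (subst sum.group[symmetric, where g = "\<lambda>e. \<Sum>t\<in>I. e t" and T = "{..m}"])
      (auto intro!: sum.cong arg_cong[where f = card])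
  also have "real \<dots> \<le> (\<Sum>s\<le>m. \<theta> * S ^ N * (1 / x) ^ s)"
    unfolding of_nat_sum
  proof (rule sum_mono)
    fix s
    have "real (card {e \<in> X. (\<Sum>t\<in>I. e t) = s}) * x ^ s \<le> \<theta> * S ^ N"
      using small_coeffs[of s] coeff_geom_poly_power_card[OF I, of q x s] by (simp add: X_def S_def N_def)
    then show "real (card {e \<in> X. (\<Sum>t\<in>I. e t) = s}) \<le> \<theta> * S ^ N * (1 / x) ^ s"
      using x by (simp add: field_simps power_one_over)
  qed
  also have "\<dots> = \<theta> * S ^ N * (\<Sum>s\<le>m. (1 / x) ^ s)" by (simp add: sum_distrib_left)
  also have "\<dots> \<le> \<theta> * S ^ N * ((1 / x) ^ m / (1 - x))"
    using sum_inverse_powers_le[OF x, of m] x \<theta> S by (intro mult_left_mono) (simp_all add: field_simps)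
  also have "\<dots> \<le> \<theta> * S ^ N * ((1 / x powr ((real q - 1) / 3)) ^ N / (1 - x))"
  proof -
    have "3 * m \<le> (q - 1) * N" by (simp add: m_def)
    then have "real (3 * m) \<le> real ((q - 1) * N)" by (simp only: of_nat_le_iff)
    then have "real m \<le> (real q - 1) / 3 * real N" using q by (simp add: of_nat_diff)
    then show ?thesis
      using inverse_power_le_inverse_powr_power[OF x] x \<theta> S by (intro mult_left_mono divide_right_mono) auto
  qed
  also have "\<dots> = \<theta> * gamma_ratio q x ^ N / (1 - x)"
    by (simp add: gamma_ratio_def S_def power_divide)
  finally show ?thesis by (simp add: N_def)
qed

lemma card_low_degree_exponents_eventually_le:
  fixes x \<epsilon> :: real
  assumes x: "0 < x" "x < 1" and q: "2 \<le> q" and \<epsilon>: "0 < \<epsilon>"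
  obtains N0 where "\<And>I :: 'i set. finite I \<Longrightarrow> N0 \<le> card I \<Longrightarrow>
    real (card (low_degree_exponents I q)) \<le> \<epsilon> * gamma_ratio q x ^ card I"
proof -
  obtain N0 where N0: "\<And>N s. N0 \<le> N \<Longrightarrow> coeff (geom_poly q x ^ N) s \<le> \<epsilon> * (1 - x) * (\<Sum>k<q. x ^ k) ^ N"
    using coeff_geom_poly_power_small[OF x q, of "\<epsilon> * (1 - x)"] x \<epsilon> by auto
  have "real (card (low_degree_exponents I q)) \<le> \<epsilon> * gamma_ratio q x ^ card I"
    if "finite I" "N0 \<le> card I" for I :: "'i set"
    using card_low_degree_exponents_le[OF that(1) x q _ N0[OF that(2)]] x \<epsilon> by simp
  with that show ?thesis by blast
qed

section \<open>Tensor powers of a solution-free configuration\<close>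

lemma indices_eq_of_no_solution:
  fixes \<alpha> \<beta> :: "'a::field" and x y :: "nat \<Rightarrow> 'a ^ 'n"
  assumes "\<alpha> \<noteq> 0" "\<beta> \<noteq> 0" "inj_on x {..<L}" "inj_on y {..<L}"
    and no_solution: "\<And>i i' i''. i < L \<Longrightarrow> i' < L \<Longrightarrow> i'' < L \<Longrightarrow>
      \<alpha> *s x i + \<beta> *s y i = \<alpha> *s x i' + \<beta> *s y i'' \<Longrightarrow> i = i' \<or> i = i''"
    and "i < L" "j < L" "l < L" and eq: "\<alpha> *s x i + \<beta> *s y j = \<alpha> *s x l + \<beta> *s y l"
  shows "i = j \<and> j = l"
proof -
  have "l = i \<or> l = j" using no_solution[of l i j] eq \<open>i < L\<close> \<open>j < L\<close> \<open>l < L\<close> by simp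
  then show ?thesis
  proof
    assume "l = i"
    then have "y j = y l" using eq \<open>\<beta> \<noteq> 0\<close> by (simp add: vec_eq_iff)
    then show ?thesis using \<open>l = i\<close> \<open>j < L\<close> \<open>l < L\<close> \<open>inj_on y {..<L}\<close> by (auto dest: inj_onD)
  next
    assume "l = j"
    then have "x i = x l" using eq \<open>\<alpha> \<noteq> 0\<close> by (simp add: vec_eq_iff)
    then show ?thesis using \<open>l = j\<close> \<open>i < L\<close> \<open>l < L\<close> \<open>inj_on x {..<L}\<close> by (auto dest: inj_onD)
  qed
qed

lemma card_tensor_power_le_low_degree_exponents:
  fixes \<alpha> \<beta> :: "'a::{field,finite}" and x y :: "nat \<Rightarrow> 'a ^ 'n"
  assumes "\<alpha> \<noteq> 0" "\<beta> \<noteq> 0" "inj_on x {..<L}" "inj_on y {..<L}"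
    and no_solution: "\<And>i i' i''. i < L \<Longrightarrow> i' < L \<Longrightarrow> i'' < L \<Longrightarrow>
      \<alpha> *s x i + \<beta> *s y i = \<alpha> *s x i' + \<beta> *s y i'' \<Longrightarrow> i = i' \<or> i = i''"
  shows "card ({..<k} \<rightarrow>\<^sub>E {..<L}) \<le> 3 * card (low_degree_exponents (UNIV \<times> {..<k} :: ('n \<times> nat) set) CARD('a))"
proof -
  \<comment> \<open>the \<open>k\<close>-fold tensor power of the triples \<open>(\<alpha> x i, \<beta> y i, -(\<alpha> x i + \<beta> y i))\<close>\<close>
  define a where "a \<sigma> p = \<alpha> * x (\<sigma> (snd p)) $ fst p" for \<sigma> :: "nat \<Rightarrow> nat" and p :: "'n \<times> nat"
  define b where "b \<sigma> p = \<beta> * y (\<sigma> (snd p)) $ fst p" for \<sigma> :: "nat \<Rightarrow> nat" and p :: "'n \<times> nat"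
  define c where "c \<sigma> p = - (a \<sigma> p + b \<sigma> p)" for \<sigma> p
  have "(\<forall>p \<in> UNIV \<times> {..<k}. a \<sigma>1 p + b \<sigma>2 p + c \<sigma>3 p = 0) \<longleftrightarrow> \<sigma>1 = \<sigma>2 \<and> \<sigma>2 = \<sigma>3"
    if \<sigma>: "\<sigma>1 \<in> {..<k} \<rightarrow>\<^sub>E {..<L}" "\<sigma>2 \<in> {..<k} \<rightarrow>\<^sub>E {..<L}" "\<sigma>3 \<in> {..<k} \<rightarrow>\<^sub>E {..<L}"
    for \<sigma>1 \<sigma>2 \<sigma>3
  proof
    assume zero: "\<forall>p \<in> UNIV \<times> {..<k}. a \<sigma>1 p + b \<sigma>2 p + c \<sigma>3 p = 0"
    have "\<sigma>1 r = \<sigma>2 r \<and> \<sigma>2 r = \<sigma>3 r" if "r < k" for r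
    proof (rule indices_eq_of_no_solution[OF assms])
      show "\<sigma>1 r < L" "\<sigma>2 r < L" "\<sigma>3 r < L" using \<sigma> that by auto
      have "\<alpha> * x (\<sigma>1 r) $ t + \<beta> * y (\<sigma>2 r) $ t = \<alpha> * x (\<sigma>3 r) $ t + \<beta> * y (\<sigma>3 r) $ t" for t
        using zero[rule_format, of "(t, r)"] that by (simp add: a_def b_def c_def algebra_simps)
      then show "\<alpha> *s x (\<sigma>1 r) + \<beta> *s y (\<sigma>2 r) = \<alpha> *s x (\<sigma>3 r) + \<beta> *s y (\<sigma>3 r)"
        by (simp add: vec_eq_iff)
    qed
    then show "\<sigma>1 = \<sigma>2 \<and> \<sigma>2 = \<sigma>3"
      using \<sigma> by (metis PiE_ext lessThan_iff)
  qed (simp add: c_def)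
  then show ?thesis
    by (intro card_tricolored_sum_free_le[where a = a and b = b and c = c]) (simp_all add: finite_PiE)
qed

lemma tensor_power_bound_of_no_solution:
  fixes \<alpha> \<beta> :: "'a::{field,finite}" and x y :: "nat \<Rightarrow> 'a ^ 'n" and x0 :: real
  assumes "\<alpha> \<noteq> 0" "\<beta> \<noteq> 0" "inj_on x {..<L}" "inj_on y {..<L}"
    and no_solution: "\<And>i i' i''. i < L \<Longrightarrow> i' < L \<Longrightarrow> i'' < L \<Longrightarrow>
      \<alpha> *s x i + \<beta> *s y i = \<alpha> *s x i' + \<beta> *s y i'' \<Longrightarrow> i = i' \<or> i = i''"
    and x0: "0 < x0" "x0 < 1"
  obtains k where "real L ^ k \<le> 3 / 4 * (gamma_ratio CARD('a) x0 ^ CARD('n)) ^ k"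
proof -
  have q: "2 \<le> CARD('a)" by (rule card_field_ge_2)
  obtain N0 where N0: "\<And>I :: ('n \<times> nat) set. finite I \<Longrightarrow> N0 \<le> card I \<Longrightarrow>
      real (card (low_degree_exponents I CARD('a))) \<le> 1 / 4 * gamma_ratio CARD('a) x0 ^ card I"
    using card_low_degree_exponents_eventually_le[OF x0 q, of "1 / 4"] by auto
  define k where "k = Suc N0"
  define I where "I = (UNIV :: 'n set) \<times> {..<k}"
  have card_I: "card I = CARD('n) * k" by (simp add: I_def card_cartesian_product)
  moreover have "k \<le> CARD('n) * k" using mult_le_mono1[of 1 "CARD('n)" k] by simp
  ultimately have "N0 \<le> card I" by (simp add: k_def)
  have "real L ^ k = real (card ({..<k} \<rightarrow>\<^sub>E {..<L}))" by (simp add: card_PiE)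
  also have "\<dots> \<le> 3 * real (card (low_degree_exponents I CARD('a)))"
    using card_tensor_power_le_low_degree_exponents[OF assms(1-4) no_solution, of k]
    unfolding I_def by linarith
  also have "\<dots> \<le> 3 / 4 * (gamma_ratio CARD('a) x0 ^ CARD('n)) ^ k"
    using N0[OF _ \<open>N0 \<le> card I\<close>] by (simp add: I_def card_I power_mult)
  finally show ?thesis by (rule that)
qed

theorem lemma3p3:
  fixes \<alpha> \<beta> :: "'a::{field, finite}"
    and x y :: "nat \<Rightarrow> 'a ^ 'n"
    and L q :: nat
  assumes "q = CARD('a)"
    and "\<exists>p k. prime p \<and> k \<ge> 1 \<and> q = p ^ k"
    and "\<alpha> \<noteq> 0" and "\<beta> \<noteq> 0"
    and "inj_on x {..<L}" and "inj_on y {..<L}"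
    and "real L \<ge> (Gamma_q q) ^ CARD('n)"
  shows "\<exists>i<L. \<exists>i'<L. \<exists>i''<L. i \<noteq> i' \<and> i \<noteq> i'' \<and>
           \<alpha> *s x i + \<beta> *s y i = \<alpha> *s x i' + \<beta> *s y i''"
proof (rule ccontr)
  \<comment> \<open>the prime-power hypothesis is automatic for the finite field \<open>'a\<close>\<close>
  assume "\<not> ?thesis"
  then have no_solution: "\<And>i i' i''. i < L \<Longrightarrow> i' < L \<Longrightarrow> i'' < L \<Longrightarrow>
      \<alpha> *s x i + \<beta> *s y i = \<alpha> *s x i' + \<beta> *s y i'' \<Longrightarrow> i = i' \<or> i = i''"
    by blast
  have q: "2 \<le> q" using assms(1) card_field_ge_2 by simp
  obtain x0 where x0: "0 < x0" "x0 < 1" and Gamma: "Gamma_q q = gamma_ratio q x0"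
    using Gamma_q_eq_gamma_ratio[OF q] by blast
  obtain k where "real L ^ k \<le> 3 / 4 * (gamma_ratio CARD('a) x0 ^ CARD('n)) ^ k"
    by (rule tensor_power_bound_of_no_solution[OF assms(3-6) no_solution x0])
  moreover have "Gamma_q q = gamma_ratio CARD('a) x0" using Gamma assms(1) by simp
  ultimately have "real L ^ k \<le> 3 / 4 * (Gamma_q q ^ CARD('n)) ^ k" by simp
  moreover have "0 < Gamma_q q ^ CARD('n)" using gamma_ratio_pos[OF x0(1), of q] q by (simp add: Gamma)
  then have "0 < (Gamma_q q ^ CARD('n)) ^ k" by simp
  moreover have "(Gamma_q q ^ CARD('n)) ^ k \<le> real L ^ k"
    using assms(7) \<open>0 < Gamma_q q ^ CARD('n)\<close> by (intro power_mono) simp_all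
  ultimately show False by linarith
qed

end
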